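(* Let $N\ge1$, $f:\mathbb{N}^N\to\mathbb{N}$, $k\ge0$ and $\boldsymbol{\ell}\in\mathbb{N}^N$. Then: (a) if $k$ is even and $\boldsymbol{\ell}$ has at least one odd entry, $\binom{k}{\boldsymbol{\ell}}_f\equiv 0\pmod 2$; (b) if $k$ is even and all entries of $\boldsymbol{\ell}$ are even, $\binom{k}{\boldsymbol{\ell}}_f\equiv\binom{k/2}{\boldsymbol{\ell}/2}_f\pmod 2$; (c) if $k$ is odd, $\displaystyle\binom{k}{\boldsymbol{\ell}}_f\equiv\sum_{\mathbf{s}}f(\mathbf{s})\binom{\lfloor k/2\rfloor}{(\boldsymbol{\ell}-\mathbf{s})/2}_f\pmod 2$, the sum over all $\mathbf{s}\in\mathbb{N}^N$ such that $\boldsymbol{\ell}-\mathbf{s}\in\mathbb{N}^N$ has only even entries.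
   Context: $\mathbb{N}=\{0,1,2,\dots\}$. For $k\ge0$ and $\mathbf{x}\in\mathbb{N}^N$, $\binom{k}{\mathbf{x}}_f=\sum_{\mathbf{m}_1+\cdots+\mathbf{m}_k=\mathbf{x}} f(\mathbf{m}_1)\cdots f(\mathbf{m}_k)$ over tuples of vectors in $\mathbb{N}^N$ (the number of $f$-weighted vector compositions of $\mathbf{x}$ with $k$ parts). *)

theory Defs
  imports "HOL-Analysis.Analysis"
begin

text \<open>Vectors in N^N are represented as functions nat => nat vanishing outside {..<N}.\<close>
definition vecs :: "nat \<Rightarrow> (nat \<Rightarrow> nat) set" where
  "vecs N = {x. \<forall>i\<ge>N. x i = 0}"

definition compositions :: "nat \<Rightarrow> nat \<Rightarrow> (nat \<Rightarrow> nat) \<Rightarrow> (nat \<Rightarrow> nat \<Rightarrow> nat) set" where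
  "compositions N k x = {ms. (\<forall>j<k. ms j \<in> vecs N) \<and> (\<forall>j\<ge>k. ms j = (\<lambda>_. 0))
        \<and> (\<forall>i. (\<Sum>j<k. ms j i) = x i)}"

definition fbinom :: "((nat \<Rightarrow> nat) \<Rightarrow> nat) \<Rightarrow> nat \<Rightarrow> nat \<Rightarrow> (nat \<Rightarrow> nat) \<Rightarrow> nat" where
  "fbinom f N k x = (\<Sum>ms\<in>compositions N k x. \<Prod>j<k. f (ms j))"

end

theory Submission
  imports Defs "HOL-Library.Z2"
begin

text \<open>
  Cutting a composition with \<open>a + b\<close> parts after its first \<open>a\<close> parts gives the convolution
  \<open>C(a + b, x) = (\<Sum>y \<le> x. C(a, y) C(b, x - y))\<close>. For \<open>a = b = m\<close> the summands at \<open>y\<close> and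
  \<open>x - y\<close> are equal, so modulo 2 only the fixed point \<open>y = x/2\<close> of the involution
  \<open>y \<mapsto> x - y\<close> survives; it exists only when all entries of \<open>x\<close> are even, and it contributes
  \<open>C(m, x/2)\<^sup>2 \<equiv> C(m, x/2)\<close>. For odd \<open>k = 1 + 2m\<close> one splits off a single part, using
  \<open>C(1, s) = f s\<close>.
\<close>

lemma sum_lessThan_add:
  fixes a b :: nat
  shows "(\<Sum>j<a + b. g j) = (\<Sum>j<a. g j) + (\<Sum>j<b. g (a + j) :: 'c::comm_monoid_add)"
  by (induction b) (auto simp: add.assoc)

lemma prod_lessThan_add:
  fixes a b :: nat
  shows "(\<Prod>j<a + b. g j) = (\<Prod>j<a. g j) * (\<Prod>j<b. g (a + j) :: 'c::comm_monoid_mult)"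
  by (induction b) (auto simp: mult.assoc)

lemma sum_involution_eq_sum_fixed_points:
  fixes g :: "'a \<Rightarrow> 'b::comm_monoid_add"
  assumes "finite A" and "\<And>x. x \<in> A \<Longrightarrow> \<sigma> x \<in> A" and "\<And>x. x \<in> A \<Longrightarrow> \<sigma> (\<sigma> x) = x"
    and "\<And>x. x \<in> A \<Longrightarrow> \<sigma> x \<noteq> x \<Longrightarrow> g (\<sigma> x) + g x = 0"
  shows "sum g A = sum g {x\<in>A. \<sigma> x = x}"
proof -
  have "sum g (A - {x. \<sigma> x = x}) = 0"
    by (rule sum_involution_eq_0[where h = \<sigma>]) (use assms in auto)
  then show ?thesis
    using sum.Int_Diff[OF \<open>finite A\<close>, of g "{x. \<sigma> x = x}"] by (simp add: Int_def conj_commute)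
qed

lemma nat_mod_2_eq_iff_of_nat_bit_eq:
  "(a::nat) mod 2 = b mod 2 \<longleftrightarrow> (of_nat a :: bit) = of_nat b"
  by (simp only: Z2.bit_eq_iff even_of_nat) presburger

definition vecs_below :: "nat \<Rightarrow> (nat \<Rightarrow> nat) \<Rightarrow> (nat \<Rightarrow> nat) set" where
  "vecs_below N x = {s\<in>vecs N. \<forall>i<N. s i \<le> x i}"

lemma vecs_below_le:
  "y \<in> vecs_below N x \<Longrightarrow> y i \<le> x i"
  by (cases "i < N") (auto simp: vecs_below_def vecs_def)

lemma vecs_below_diff:
  "x \<in> vecs N \<Longrightarrow> y \<in> vecs_below N x \<Longrightarrow> (\<lambda>i. x i - y i) \<in> vecs_below N x"
  by (auto simp: vecs_below_def vecs_def)

lemma finite_vecs_bounded: "finite {y\<in>vecs N. \<forall>i<N. y i \<le> M}"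
proof (rule finite_subset)
  show "finite {y. \<forall>i. (i \<in> {..<N} \<longrightarrow> y i \<in> {..M}) \<and> (i \<notin> {..<N} \<longrightarrow> y i = (0::nat))}"
    by (rule finite_set_of_finite_funs) auto
qed (auto simp: vecs_def)

lemma finite_vecs_below: "finite (vecs_below N x)"
proof (rule finite_subset)
  show "vecs_below N x \<subseteq> {y\<in>vecs N. \<forall>i<N. y i \<le> (\<Sum>i<N. x i)}"
    using member_le_sum[of _ "{..<N}" x] by (auto simp: vecs_below_def intro: order_trans)
qed (rule finite_vecs_bounded)

lemma compositions_part_le:
  assumes "ms \<in> compositions N k x" and "j < k"
  shows "ms j i \<le> x i"
proof -
  have "ms j i \<le> (\<Sum>j<k. ms j i)"
    using assms(2) by (intro member_le_sum) auto
  also have "\<dots> = x i"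
    using assms(1) by (simp add: compositions_def)
  finally show ?thesis .
qed

lemma finite_compositions: "finite (compositions N k x)"
proof (rule finite_subset)
  let ?W = "{y\<in>vecs N. \<forall>i<N. y i \<le> (\<Sum>i<N. x i)}"
  show "finite {ms. \<forall>j. (j \<in> {..<k} \<longrightarrow> ms j \<in> ?W) \<and> (j \<notin> {..<k} \<longrightarrow> ms j = (\<lambda>_. 0::nat))}"
    by (rule finite_set_of_finite_funs) (simp_all add: finite_vecs_bounded)
  show "compositions N k x \<subseteq> \<dots>"
  proof
    fix ms assume ms: "ms \<in> compositions N k x"
    have "ms j i \<le> (\<Sum>i<N. x i)" if "j < k" "i < N" for i j
      using compositions_part_le[OF ms, of j i] member_le_sum[of i "{..<N}" x] that by simp
    then have "ms j \<in> ?W" if "j < k" for j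
      using ms that by (simp add: compositions_def)
    moreover have "ms j = (\<lambda>_. 0)" if "\<not> j < k" for j
      using ms that by (simp add: compositions_def)
    ultimately show "ms \<in> {ms. \<forall>j. (j \<in> {..<k} \<longrightarrow> ms j \<in> ?W) \<and> (j \<notin> {..<k} \<longrightarrow> ms j = (\<lambda>_. 0))}"
      by simp
  qed
qed

lemma fbinom_one:
  assumes s: "s \<in> vecs N"
  shows "fbinom f N 1 s = f s"
proof -
  have "compositions N 1 s = {\<lambda>j. if j = 0 then s else (\<lambda>_. 0)}"
    using s by (auto simp: compositions_def fun_eq_iff)
  then show ?thesis by (simp add: fbinom_def)
qed

definition tuple_append :: "nat \<Rightarrow> (nat \<Rightarrow> 'a) \<Rightarrow> (nat \<Rightarrow> 'a) \<Rightarrow> nat \<Rightarrow> 'a" where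
  "tuple_append a p q = (\<lambda>j. if j < a then p j else q (j - a))"

lemma tuple_append_in_compositions:
  assumes "y \<in> vecs_below N x" "p \<in> compositions N a y" "q \<in> compositions N b (\<lambda>i. x i - y i)"
  shows "tuple_append a p q \<in> compositions N (a + b) x"
proof -
  have "(\<Sum>j<a + b. tuple_append a p q j i) = x i" for i
    using assms vecs_below_le[OF assms(1), of i]
    by (simp add: sum_lessThan_add tuple_append_def compositions_def)
  then show ?thesis
    using assms by (auto simp: compositions_def tuple_append_def)
qed

lemma compositions_split:
  assumes "ms \<in> compositions N (a + b) x"
  defines "y \<equiv> \<lambda>i. \<Sum>j<a. ms j i"
  shows "y \<in> vecs_below N x"
    and "(\<lambda>j. if j < a then ms j else (\<lambda>_. 0)) \<in> compositions N a y"
    and "(\<lambda>j. ms (a + j)) \<in> compositions N b (\<lambda>i. x i - y i)"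
proof -
  have parts: "\<And>j. j < a + b \<Longrightarrow> ms j \<in> vecs N" "\<And>j. a + b \<le> j \<Longrightarrow> ms j = (\<lambda>_. 0)"
    using assms by (auto simp: compositions_def)
  have total: "x i = y i + (\<Sum>j<b. ms (a + j) i)" for i
    using assms sum_lessThan_add[of "\<lambda>j. ms j i" a b] by (simp add: compositions_def y_def)
  have "y i = 0" if "N \<le> i" for i
    unfolding y_def using parts(1) that by (intro sum.neutral) (simp add: vecs_def)
  then show "y \<in> vecs_below N x"
    using total by (simp add: vecs_below_def vecs_def le_add1)
  show "(\<lambda>j. if j < a then ms j else (\<lambda>_. 0)) \<in> compositions N a y"
    using parts(1) by (simp add: compositions_def y_def)
  show "(\<lambda>j. ms (a + j)) \<in> compositions N b (\<lambda>i. x i - y i)"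
    using parts total by (simp add: compositions_def)
qed

lemma bij_betw_tuple_append_compositions:
  "bij_betw (\<lambda>(y, p, q). tuple_append a p q)
     (SIGMA y:vecs_below N x. compositions N a y \<times> compositions N b (\<lambda>i. x i - y i))
     (compositions N (a + b) x)"
proof (rule bij_betw_byWitness[where f' = "\<lambda>ms. ((\<lambda>i. \<Sum>j<a. ms j i),
    (\<lambda>j. if j < a then ms j else (\<lambda>_. 0)), (\<lambda>j. ms (a + j)))"], safe)
  show "(\<lambda>i. \<Sum>j<a. tuple_append a p q j i) = y"
    and "(\<lambda>j. if j < a then tuple_append a p q j else (\<lambda>_. 0)) = p"
    if "p \<in> compositions N a y" for y p q
    using that by (auto simp: compositions_def tuple_append_def)
  show "(\<lambda>j. tuple_append a p q (a + j)) = q" for p q :: "nat \<Rightarrow> nat \<Rightarrow> nat"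
    by (simp add: tuple_append_def)
  show "tuple_append a (\<lambda>j. if j < a then ms j else (\<lambda>_. 0)) (\<lambda>j. ms (a + j)) = ms" for ms
    by (simp add: tuple_append_def fun_eq_iff)
qed (simp_all add: tuple_append_in_compositions compositions_split)

lemma fbinom_add:
  assumes "x \<in> vecs N"
  shows "fbinom f N (a + b) x
    = (\<Sum>y\<in>vecs_below N x. fbinom f N a y * fbinom f N b (\<lambda>i. x i - y i))"
proof -
  let ?P = "\<lambda>k ms. \<Prod>j<k. f (ms j)"
  let ?T = "SIGMA y:vecs_below N x. compositions N a y \<times> compositions N b (\<lambda>i. x i - y i)"
  have "(\<Sum>y\<in>vecs_below N x. fbinom f N a y * fbinom f N b (\<lambda>i. x i - y i))
      = (\<Sum>(y, p, q)\<in>?T. ?P a p * ?P b q)"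
    by (simp add: fbinom_def sum_product sum.cartesian_product sum.Sigma finite_vecs_below
        finite_compositions case_prod_beta)
  also have "\<dots> = (\<Sum>(y, p, q)\<in>?T. ?P (a + b) (tuple_append a p q))"
    by (intro sum.cong refl) (auto simp: prod_lessThan_add tuple_append_def)
  also have "\<dots> = fbinom f N (a + b) x"
    unfolding fbinom_def
    using sum.reindex_bij_betw[OF bij_betw_tuple_append_compositions, of "?P (a + b)"]
    by (simp add: case_prod_beta)
  finally show ?thesis ..
qed

lemma fbinom_double_parity:
  assumes x: "x \<in> vecs N"
  shows "(of_nat (fbinom f N (2 * m) x) :: bit)
    = (if \<forall>i<N. even (x i) then of_nat (fbinom f N m (\<lambda>i. x i div 2)) else 0)"
proof -
  let ?F = "\<lambda>y. of_nat (fbinom f N m y) :: bit"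
  let ?\<sigma> = "\<lambda>y i. x i - y i"
  let ?g = "\<lambda>y. ?F y * ?F (?\<sigma> y)"
  let ?half = "\<lambda>i. x i div 2"
  let ?all_even = "\<forall>i<N. even (x i)"
  have \<sigma>\<sigma>: "?\<sigma> (?\<sigma> y) = y" if "y \<in> vecs_below N x" for y
    using vecs_below_le[OF that] by (simp add: fun_eq_iff)
  have fixed_iff: "?\<sigma> y = y \<longleftrightarrow> ?all_even \<and> y = ?half" if "y \<in> vecs_below N x" for y
  proof -
    have "x i - y i = y i \<longleftrightarrow> even (x i) \<and> y i = x i div 2" for i
      using vecs_below_le[OF that, of i] by presburger
    moreover have "(\<forall>i. even (x i)) \<longleftrightarrow> ?all_even"
      using x by (auto simp: vecs_def) (metis dvd_0_right not_le)
    ultimately show ?thesis by (auto simp: fun_eq_iff)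
  qed
  have half: "?half \<in> vecs_below N x"
    using x by (simp add: vecs_below_def vecs_def)
  have "(of_nat (fbinom f N (2 * m) x) :: bit) = sum ?g (vecs_below N x)"
    using fbinom_add[OF x, of f m m] by (simp add: mult_2)
  also have "\<dots> = sum ?g {y\<in>vecs_below N x. ?\<sigma> y = y}"
    by (rule sum_involution_eq_sum_fixed_points)
       (use finite_vecs_below vecs_below_diff[OF x] \<sigma>\<sigma> in \<open>auto simp: mult.commute\<close>)
  also have "{y\<in>vecs_below N x. ?\<sigma> y = y} = (if ?all_even then {?half} else {})"
    using fixed_iff half by auto
  also have "sum ?g \<dots> = (if ?all_even then ?F ?half * ?F ?half else 0)"
  proof (cases ?all_even)
    case True
    then have "?\<sigma> ?half = ?half"
      using fixed_iff[OF half] by blast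
    then show ?thesis
      unfolding if_P[OF True] by simp
  qed (simp only: if_False sum.empty)
  finally show ?thesis
    by (simp only: mult_bit_eq_and and.idem)
qed

lemma fbinom_odd_parity:
  assumes l: "l \<in> vecs N"
  shows "(of_nat (fbinom f N (Suc (2 * m)) l) :: bit)
    = of_nat (\<Sum>s\<in>{s\<in>vecs N. \<forall>i<N. s i \<le> l i \<and> even (l i - s i)}.
        f s * fbinom f N m (\<lambda>i. (l i - s i) div 2))"
proof -
  let ?even = "\<lambda>s. \<forall>i<N. even (l i - s i)"
  have "fbinom f N (Suc (2 * m)) l
      = (\<Sum>s\<in>vecs_below N l. f s * fbinom f N (2 * m) (\<lambda>i. l i - s i))"
    using fbinom_add[OF l, of f 1 "2 * m"] fbinom_one by (simp add: vecs_below_def)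
  then have "(of_nat (fbinom f N (Suc (2 * m)) l) :: bit)
      = (\<Sum>s\<in>vecs_below N l. of_nat (f s) * of_nat (fbinom f N (2 * m) (\<lambda>i. l i - s i)))"
    by (simp only: of_nat_sum of_nat_mult)
  also have "\<dots> = (\<Sum>s\<in>vecs_below N l.
      if ?even s then of_nat (f s * fbinom f N m (\<lambda>i. (l i - s i) div 2)) else 0)"
  proof (intro sum.cong refl)
    fix s assume "s \<in> vecs_below N l"
    then have "(\<lambda>i. l i - s i) \<in> vecs N"
      using l by (auto simp: vecs_def)
    show "of_nat (f s) * of_nat (fbinom f N (2 * m) (\<lambda>i. l i - s i))
        = (if ?even s then of_nat (f s * fbinom f N m (\<lambda>i. (l i - s i) div 2)) else (0::bit))"
      unfolding fbinom_double_parity[OF \<open>(\<lambda>i. l i - s i) \<in> vecs N\<close>]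
      by (simp only: if_distrib[of "times (of_nat (f s))"] of_nat_mult mult_zero_right)
  qed
  also have "\<dots> = of_nat (\<Sum>s\<in>{s\<in>vecs_below N l. ?even s}. f s * fbinom f N m (\<lambda>i. (l i - s i) div 2))"
    by (simp only: sum.inter_filter[OF finite_vecs_below] of_nat_sum if_distrib[of of_nat] of_nat_0)
  also have "{s\<in>vecs_below N l. ?even s} = {s\<in>vecs N. \<forall>i<N. s i \<le> l i \<and> even (l i - s i)}"
    by (auto simp: vecs_below_def)
  finally show ?thesis .
qed

theorem theorem5:
  fixes f :: "(nat \<Rightarrow> nat) \<Rightarrow> nat" and N k :: nat and l :: "nat \<Rightarrow> nat"
  assumes "N \<ge> 1" and "l \<in> vecs N"
  shows "(even k \<and> (\<exists>i<N. odd (l i)) \<longrightarrow> fbinom f N k l mod 2 = 0)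
    \<and> (even k \<and> (\<forall>i<N. even (l i)) \<longrightarrow>
         fbinom f N k l mod 2 = fbinom f N (k div 2) (\<lambda>i. l i div 2) mod 2)
    \<and> (odd k \<longrightarrow>
         fbinom f N k l mod 2 =
           (\<Sum>s\<in>{s\<in>vecs N. (\<forall>i<N. s i \<le> l i \<and> even (l i - s i))}.
               f s * fbinom f N (k div 2) (\<lambda>i. (l i - s i) div 2)) mod 2)"
proof (intro conjI impI)
  assume "even k \<and> (\<exists>i<N. odd (l i))"
  then have "(of_nat (fbinom f N k l) :: bit) = of_nat 0"
    using fbinom_double_parity[OF assms(2), of f "k div 2"] by auto
  then show "fbinom f N k l mod 2 = 0"
    unfolding nat_mod_2_eq_iff_of_nat_bit_eq[symmetric] by simp
next
  assume "even k \<and> (\<forall>i<N. even (l i))"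
  then show "fbinom f N k l mod 2 = fbinom f N (k div 2) (\<lambda>i. l i div 2) mod 2"
    using fbinom_double_parity[OF assms(2), of f "k div 2"]
    by (simp add: nat_mod_2_eq_iff_of_nat_bit_eq)
next
  assume "odd k"
  then show "fbinom f N k l mod 2 =
      (\<Sum>s\<in>{s\<in>vecs N. (\<forall>i<N. s i \<le> l i \<and> even (l i - s i))}.
          f s * fbinom f N (k div 2) (\<lambda>i. (l i - s i) div 2)) mod 2"
    using fbinom_odd_parity[OF assms(2), of f "k div 2"]
    by (simp add: nat_mod_2_eq_iff_of_nat_bit_eq)
qed

end
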